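(* Let $(\mathbf X,\mathbf Y)=\{(X^n,Y^n)\}_{n\ge1}$ be a general correlated source. For any $\varepsilon\in[0,1)$, \[(1-\varepsilon)\underline H(\mathbf X|\mathbf Y)\le R^\varepsilon_{com}(\mathbf X|\mathbf Y)\le(1-\varepsilon)\overline H(\mathbf X|\mathbf Y).\]
   Context: A general correlated source $(\mathbf X,\mathbf Y)=\{(X^n,Y^n)\}_{n\ge1}$ is an arbitrary sequence of pairs of random variables, $(X^n,Y^n)$ taking values in $\mathcal X^n\times\mathcal Y^n$ with $\mathcal X,\mathcal Y$ finite or countably infinite, with joint distribution $P_{X^nY^n}$ (no structural assumptions). Logarithms are base 2. For real random variables $Z_n$: $\mathrm{p\text{-}limsup}_n Z_n=\inf\{\alpha:\lim_n\Pr\{Z_n>\alpha\}=0\}$ and $\mathrm{p\text{-}liminf}_n Z_n=\sup\{\beta:\lim_n\Pr\{Z_n<\beta\}=0\}$. Define $\overline H(\mathbf X|\mathbf Y)=\mathrm{p\text{-}limsup}_n\frac1n\log\frac1{P_{X^n|Y^n}(X^n|Y^n)}$ and $\underline H(\mathbf X|\mathbf Y)=\mathrm{p\text{-}liminf}_n\frac1n\log\frac1{P_{X^n|Y^n}(X^n|Y^n)}$. Coding with common side-information: a code of blocklength $n$ is $(\varphi_n,\psi_n)$ with encoder $\varphi_n:\mathcal X^n\times\mathcal Y^n\to\{0,1\}^*$ such that for each $y^n$ the set $\{\varphi_n(x^n|y^n):x^n\}$ is prefix-free, and decoder $\psi_n:\{0,1\}^*\times\mathcal Y^n\to\mathcal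 X^n$; error probability $\Pr\{\psi_n(\varphi_n(X^n|Y^n),Y^n)\ne X^n\}$; $\ell_n(x^n|y^n)$ is the length of $\varphi_n(x^n|y^n)$. $R$ is $\varepsilon$-achievable if there are codes with $\limsup_n$ error probability $\le\varepsilon$ and $\limsup_n\frac1n\mathbb E[\ell_n(X^n|Y^n)]\le R$; $R^\varepsilon_{com}(\mathbf X|\mathbf Y)$ is the infimum of $\varepsilon$-achievable rates. *)

theory Defs
  imports "HOL-Probability.Probability" "HOL-Library.Sublist"
begin

definition general_source :: "(nat \<Rightarrow> ('a list \<times> 'b list) pmf) \<Rightarrow> bool" where
  "general_source P \<longleftrightarrow>
     (\<forall>n. \<forall>xy \<in> set_pmf (P n). length (fst xy) = n \<and> length (snd xy) = n)"

definition cond_prob :: "('a list \<times> 'b list) pmf \<Rightarrow> 'a list \<Rightarrow> 'b list \<Rightarrow> real" where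
  "cond_prob Q x y = pmf Q (x, y) / pmf (map_pmf snd Q) y"

definition ent_density :: "(nat \<Rightarrow> ('a list \<times> 'b list) pmf) \<Rightarrow> nat \<Rightarrow> 'a list \<times> 'b list \<Rightarrow> real" where
  "ent_density P n xy = (1 / real n) * log 2 (1 / cond_prob (P n) (fst xy) (snd xy))"

text \<open>p-limsup and p-liminf (values in the extended reals; inf of the empty set is +infinity).\<close>
definition p_limsup :: "(nat \<Rightarrow> 'c pmf) \<Rightarrow> (nat \<Rightarrow> 'c \<Rightarrow> real) \<Rightarrow> ereal" where
  "p_limsup M Z = Inf (ereal ` {\<alpha>. ((\<lambda>n. measure_pmf.prob (M n) {w. Z n w > \<alpha>}) \<longlongrightarrow> 0) sequentially})"

definition p_liminf :: "(nat \<Rightarrow> 'c pmf) \<Rightarrow> (nat \<Rightarrow> 'c \<Rightarrow> real) \<Rightarrow> ereal" where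
  "p_liminf M Z = Sup (ereal ` {\<beta>. ((\<lambda>n. measure_pmf.prob (M n) {w. Z n w < \<beta>}) \<longlongrightarrow> 0) sequentially})"

definition upper_cond_entropy :: "(nat \<Rightarrow> ('a list \<times> 'b list) pmf) \<Rightarrow> ereal" where
  "upper_cond_entropy P = p_limsup P (ent_density P)"

definition lower_cond_entropy :: "(nat \<Rightarrow> ('a list \<times> 'b list) pmf) \<Rightarrow> ereal" where
  "lower_cond_entropy P = p_liminf P (ent_density P)"

definition prefix_free :: "bool list set \<Rightarrow> bool" where
  "prefix_free S \<longleftrightarrow> (\<forall>u\<in>S. \<forall>v\<in>S. \<not> strict_prefix u v)"

definition com_code :: "nat \<Rightarrow> ('a list \<Rightarrow> 'b list \<Rightarrow> bool list) \<Rightarrow> bool" where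
  "com_code n enc \<longleftrightarrow> (\<forall>y. length y = n \<longrightarrow> prefix_free {enc x y | x. length x = n})"

definition err_prob :: "('a list \<times> 'b list) pmf \<Rightarrow> ('a list \<Rightarrow> 'b list \<Rightarrow> bool list)
    \<Rightarrow> (bool list \<Rightarrow> 'b list \<Rightarrow> 'a list) \<Rightarrow> real" where
  "err_prob Q enc dec = measure_pmf.prob Q {xy. dec (enc (fst xy) (snd xy)) (snd xy) \<noteq> fst xy}"

definition exp_length :: "('a list \<times> 'b list) pmf \<Rightarrow> ('a list \<Rightarrow> 'b list \<Rightarrow> bool list) \<Rightarrow> ennreal" where
  "exp_length Q enc = (\<integral>\<^sup>+ xy. ennreal (real (length (enc (fst xy) (snd xy)))) \<partial>measure_pmf Q)"

definition com_achievable :: "(nat \<Rightarrow> ('a list \<times> 'b list) pmf) \<Rightarrow> real \<Rightarrow> real \<Rightarrow> bool" where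
  "com_achievable P \<epsilon> R \<longleftrightarrow>
    (\<exists>(enc :: nat \<Rightarrow> 'a list \<Rightarrow> 'b list \<Rightarrow> bool list) (dec :: nat \<Rightarrow> bool list \<Rightarrow> 'b list \<Rightarrow> 'a list).
       (\<forall>n. com_code n (enc n)) \<and>
       limsup (\<lambda>n. ereal (err_prob (P n) (enc n) (dec n))) \<le> ereal \<epsilon> \<and>
       limsup (\<lambda>n. enn2ereal (exp_length (P n) (enc n)) / ereal (real n)) \<le> ereal R)"

definition R_com :: "(nat \<Rightarrow> ('a list \<times> 'b list) pmf) \<Rightarrow> real \<Rightarrow> ereal" where
  "R_com P \<epsilon> = Inf (ereal ` {R. com_achievable P \<epsilon> R})"

end

theory Submission
  imports Defs "HOL-Real_Asymp.Real_Asymp"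
begin

text \<open>
  Converse: if \<open>b\<close> lies below the lower conditional entropy, then with probability tending to one
  \<open>P(x|y) \<le> 2 powr (- n b)\<close>. Correct decoding makes the encoder injective on each fibre, so the
  fewer than \<open>2 ^ Suc L\<close> codewords of length at most \<open>L = n (b - \<eta>)\<close> cover probability at most
  \<open>2 * 2 powr (- n \<eta>)\<close> of such pairs. Hence codewords longer than \<open>n (b - \<eta>)\<close> carry
  probability at least about \<open>1 - \<epsilon>\<close>, and the rate is at least \<open>(1 - \<epsilon>) b\<close>.

  Achievability: for \<open>\<alpha>\<close> above the upper conditional entropy, words with
  \<open>P(x|y) \<ge> 2 powr (- n \<delta>)\<close> (at most \<open>2 powr (n \<delta>)\<close> per \<open>y\<close>) are sent as \<open>10\<close>
  followed by a fixed-length index; among the words with \<open>P(x|y) \<ge> 2 powr (- n \<alpha>)\<close>, just enough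
  to reach success probability \<open>1 - \<epsilon>\<close> are sent as \<open>11\<close> followed by an index of length about
  \<open>n \<alpha>\<close>; everything else is sent as \<open>0\<close> and lost. The rate tends to \<open>(1 - \<epsilon>) \<alpha> + \<delta>\<close>.
\<close>

lemma pmf_le_pmf_map_snd: "pmf Q (x, y) \<le> pmf (map_pmf snd Q) y"
proof -
  have "pmf Q (x, y) = measure Q {(x, y)}" by (simp add: measure_pmf_single)
  also have "\<dots> \<le> measure Q (snd -` {y})" by (intro measure_pmf.finite_measure_mono) auto
  finally show ?thesis by (simp add: pmf_map)
qed

lemma cond_prob_nonneg: "0 \<le> cond_prob Q x y"
  by (simp add: cond_prob_def)

lemma cond_prob_le_1: "cond_prob Q x y \<le> 1"
  using pmf_le_pmf_map_snd[of Q x y] by (auto simp: cond_prob_def divide_le_eq_1)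

lemma pmf_eq_cond_prob_mult: "pmf Q (x, y) = cond_prob Q x y * pmf (map_pmf snd Q) y"
  using pmf_le_pmf_map_snd[of Q x y] pmf_nonneg[of Q "(x, y)"] by (auto simp: cond_prob_def)

lemma cond_prob_pos:
  assumes "(x, y) \<in> set_pmf Q"
  shows "0 < cond_prob Q x y"
proof -
  have "0 < pmf Q (x, y)" using assms by (rule pmf_positive)
  with pmf_le_pmf_map_snd[of Q x y] show ?thesis by (simp add: cond_prob_def)
qed

lemma sum_pmf_fibre_le:
  assumes "finite F"
  shows "(\<Sum>x\<in>F. pmf Q (x, y)) \<le> pmf (map_pmf snd Q) y"
proof -
  have "(\<Sum>x\<in>F. pmf Q (x, y)) = measure Q ((\<lambda>x. (x, y)) ` F)"
    using assms by (simp add: measure_measure_pmf_finite sum.reindex inj_on_def)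
  also have "\<dots> \<le> measure Q (snd -` {y})" by (intro measure_pmf.finite_measure_mono) auto
  finally show ?thesis by (simp add: pmf_map)
qed

lemma card_cond_prob_ge:
  assumes "0 < c"
  shows "finite {x. c \<le> cond_prob Q x y}" and "real (card {x. c \<le> cond_prob Q x y}) * c \<le> 1"
proof -
  let ?A = "{x. c \<le> cond_prob Q x y}" and ?py = "pmf (map_pmf snd Q) y"
  have finite_subset_bound: "real (card F) * c \<le> 1" if F: "finite F" "F \<subseteq> ?A" for F
  proof (cases "F = {}")
    case False
    then obtain x where "c \<le> cond_prob Q x y" using F by blast
    with assms have py: "0 < ?py"
      using pmf_nonneg[of "map_pmf snd Q" y] by (cases "?py = 0") (auto simp: cond_prob_def)
    have "real (card F) * c * ?py = (\<Sum>x\<in>F. c * ?py)" by simp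
    also have "\<dots> \<le> (\<Sum>x\<in>F. pmf Q (x, y))"
      using F py by (intro sum_mono) (auto simp: pmf_eq_cond_prob_mult)
    also have "\<dots> \<le> ?py" using F(1) by (rule sum_pmf_fibre_le)
    finally show ?thesis using py by simp
  qed simp
  show fin: "finite ?A"
  proof (rule ccontr)
    assume "infinite ?A"
    then obtain F where F: "finite F" "card F = nat \<lceil>1 / c\<rceil> + 1" "F \<subseteq> ?A"
      using infinite_arbitrarily_large by blast
    then have "1 / c < real (card F)" by linarith
    with assms have "1 < real (card F) * c" by (simp add: divide_less_eq)
    with finite_subset_bound[OF F(1,3)] show False by simp
  qed
  show "real (card ?A) * c \<le> 1" using finite_subset_bound[OF fin] by simp
qed

lemma card_cond_prob_ge_inverse_pow2:
  "finite {x. 1 / 2 ^ k \<le> cond_prob Q x y} \<and> card {x. 1 / 2 ^ k \<le> cond_prob Q x y} \<le> 2 ^ k"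
proof
  show "finite {x. 1 / 2 ^ k \<le> cond_prob Q x y}" by (rule card_cond_prob_ge) simp
  have "real (card {x. 1 / 2 ^ k \<le> cond_prob Q x y}) * (1 / 2 ^ k) \<le> 1"
    by (rule card_cond_prob_ge) simp
  then have "real (card {x. 1 / 2 ^ k \<le> cond_prob Q x y}) \<le> real (2 ^ k)"
    by (simp add: field_simps)
  then show "card {x. 1 / 2 ^ k \<le> cond_prob Q x y} \<le> 2 ^ k" by (simp only: of_nat_le_iff)
qed

lemma ent_density_nonneg: "0 \<le> ent_density P n z"
  using cond_prob_nonneg[of "P n" "fst z" "snd z"] cond_prob_le_1[of "P n" "fst z" "snd z"]
  by (cases "cond_prob (P n) (fst z) (snd z) = 0") (auto simp: ent_density_def log_def)

lemma ent_density_less_iff: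
  assumes "z \<in> set_pmf (P n)" "0 < n"
  shows "ent_density P n z < b \<longleftrightarrow> 2 powr - (real n * b) < cond_prob (P n) (fst z) (snd z)"
proof -
  let ?p = "cond_prob (P n) (fst z) (snd z)"
  have p: "0 < ?p" using cond_prob_pos[of "fst z" "snd z" "P n"] assms by simp
  have "ent_density P n z < b \<longleftrightarrow> log 2 (1 / ?p) < real n * b"
    using assms by (simp add: ent_density_def field_simps)
  also have "\<dots> \<longleftrightarrow> 2 powr - (real n * b) < ?p"
    using p by (simp add: log_less_iff powr_minus field_simps)
  finally show ?thesis .
qed

lemma ent_density_greater_iff:
  assumes "z \<in> set_pmf (P n)" "0 < n"
  shows "b < ent_density P n z \<longleftrightarrow> cond_prob (P n) (fst z) (snd z) < 2 powr - (real n * b)"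
proof -
  let ?p = "cond_prob (P n) (fst z) (snd z)"
  have p: "0 < ?p" using cond_prob_pos[of "fst z" "snd z" "P n"] assms by simp
  have "b < ent_density P n z \<longleftrightarrow> real n * b < log 2 (1 / ?p)"
    using assms by (simp add: ent_density_def field_simps)
  also have "\<dots> \<longleftrightarrow> ?p < 2 powr - (real n * b)"
    using p by (simp add: less_log_iff powr_minus field_simps)
  finally show ?thesis .
qed

lemma measure_cond_prob_gt_le_ent_density:
  fixes P :: "nat \<Rightarrow> ('a list \<times> 'b list) pmf"
  assumes "0 < n"
  shows "measure (P n) {z. 2 powr - (real n * b) < cond_prob (P n) (fst z) (snd z)}
    \<le> measure (P n) {w. ent_density P n w < b}"
proof -
  have "measure (P n) {z. 2 powr - (real n * b) < cond_prob (P n) (fst z) (snd z)}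
      = measure (P n) ({z. 2 powr - (real n * b) < cond_prob (P n) (fst z) (snd z)} \<inter> set_pmf (P n))"
    by (simp add: measure_Int_set_pmf)
  also have "\<dots> \<le> measure (P n) {w. ent_density P n w < b}"
    by (intro measure_pmf.finite_measure_mono) (auto simp: ent_density_less_iff[OF _ assms])
  finally show ?thesis .
qed

lemma measure_cond_prob_lt_le_ent_density:
  fixes P :: "nat \<Rightarrow> ('a list \<times> 'b list) pmf"
  assumes "0 < n" "c \<le> 2 powr - (real n * a)"
  shows "measure (P n) {z. cond_prob (P n) (fst z) (snd z) < c} \<le> measure (P n) {w. a < ent_density P n w}"
proof -
  have "measure (P n) {z. cond_prob (P n) (fst z) (snd z) < c}
      = measure (P n) ({z. cond_prob (P n) (fst z) (snd z) < c} \<inter> set_pmf (P n))"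
    by (simp add: measure_Int_set_pmf)
  also have "\<dots> \<le> measure (P n) {w. a < ent_density P n w}"
    using assms(2) by (intro measure_pmf.finite_measure_mono) (auto simp: ent_density_greater_iff[OF _ assms(1)])
  finally show ?thesis .
qed

lemma ent_density_threshold_nonneg:
  assumes "((\<lambda>n. measure_pmf.prob (P n) {w. \<alpha> < ent_density P n w}) \<longlongrightarrow> 0) sequentially"
  shows "0 \<le> \<alpha>"
proof (rule ccontr)
  assume "\<not> 0 \<le> \<alpha>"
  then have "{w. \<alpha> < ent_density P n w} = UNIV" for n
    using ent_density_nonneg[of P n] by (auto simp: not_le intro: less_le_trans)
  with assms have "(\<lambda>n. 1::real) \<longlonglongrightarrow> 0" by simp
  then show False using LIMSEQ_unique[OF _ tendsto_const[of 1]] by fastforce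
qed

lemma inverse_pow2_le_powr:
  assumes "x \<le> real k"
  shows "1 / 2 ^ k \<le> (2::real) powr - x"
proof -
  have "1 / 2 ^ k = (2::real) powr - real k" by (simp add: powr_minus powr_realpow divide_inverse)
  also have "\<dots> \<le> 2 powr - x" using assms by simp
  finally show ?thesis .
qed

lemma measure_le_if_snd_fibres_le:
  fixes Q :: "('a \<times> 'b) pmf"
  assumes le: "\<And>y. y \<in> set_pmf (map_pmf snd Q) \<Longrightarrow>
     measure Q (B \<inter> {z. snd z = y}) \<le> c * measure Q {z. snd z = y}"
  shows "measure Q B \<le> c"
proof -
  let ?p = "map_pmf snd Q" and ?F = "\<lambda>y. {z. y = snd z}"
  have le': "measure Q (B \<inter> ?F y) \<le> c * measure Q (?F y)" if "y \<in> set_pmf ?p" for y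
  proof -
    have "{z. snd z = y} = ?F y" by auto
    then show ?thesis using le[OF that] by metis
  qed
  have fibre_pos: "0 < measure Q (?F y)" if "y \<in> set_pmf ?p" for y
    using that by (auto intro!: measure_pmf_posI)
  have "0 \<le> c"
  proof -
    obtain y where y: "y \<in> set_pmf ?p" using set_pmf_not_empty[of ?p] by blast
    have "0 \<le> c * measure Q (?F y)" using le'[OF y] measure_nonneg[of Q "B \<inter> ?F y"] by linarith
    with fibre_pos[OF y] show ?thesis by (simp add: zero_le_mult_iff)
  qed
  have cond_le: "emeasure (cond_pmf Q (?F y)) B \<le> ennreal c" if y: "y \<in> set_pmf ?p" for y
  proof -
    have "set_pmf Q \<inter> ?F y \<noteq> {}" using y by auto
    then have "emeasure (cond_pmf Q (?F y)) B = emeasure Q (B \<inter> ?F y) / emeasure Q (?F y)"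
      by (simp add: cond_pmf.rep_eq Int_commute)
    also have "\<dots> = ennreal (measure Q (B \<inter> ?F y) / measure Q (?F y))"
      using fibre_pos[OF y] by (simp add: measure_pmf.emeasure_eq_measure divide_ennreal)
    also have "\<dots> \<le> ennreal c"
      using le'[OF y] fibre_pos[OF y] by (intro ennreal_leI) (simp add: divide_le_eq)
    finally show ?thesis .
  qed
  have "bind_pmf ?p (\<lambda>y. cond_pmf Q (?F y)) = Q"
    by (rule bind_cond_pmf_cancel) (auto simp: pmf_map vimage_def eq_commute intro: arg_cong2[where f=measure])
  then have "emeasure Q B = emeasure (bind_pmf ?p (\<lambda>y. cond_pmf Q (?F y))) B" by simp
  also have "\<dots> = (\<integral>\<^sup>+y. emeasure (cond_pmf Q (?F y)) B \<partial>?p)" by simp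
  also have "\<dots> \<le> (\<integral>\<^sup>+y. ennreal c \<partial>?p)"
    by (intro nn_integral_mono_AE) (simp add: AE_measure_pmf_iff cond_le)
  also have "\<dots> = ennreal c" by simp
  finally show ?thesis using \<open>0 \<le> c\<close> by (simp add: measure_pmf.emeasure_eq_measure)
qed

lemma finite_bool_lists_length_le: "finite {xs :: bool list. length xs \<le> L}"
  using finite_lists_length_le[of "UNIV :: bool set" L] by simp

lemma card_bool_lists_length_le: "card {xs :: bool list. length xs \<le> L} < 2 ^ Suc L"
proof -
  have "card {xs :: bool list. length xs \<le> L} = (\<Sum>i\<le>L. 2 ^ i)"
    using card_lists_length_le[of "UNIV :: bool set" L] by (simp add: card_UNIV_bool)
  also have "\<dots> < 2 ^ Suc L" by (induction L) auto
  finally show ?thesis .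
qed

lemma fixed_length_code_exists:
  assumes "finite A" "card A \<le> 2 ^ k"
  shows "\<exists>f. inj_on f A \<and> (\<forall>x\<in>A. length (f x :: bool list) = k)"
proof -
  have fin: "finite {xs :: bool list. length xs = k}"
    using finite_lists_length_eq[of "UNIV :: bool set" k] by simp
  have "card A \<le> card {xs :: bool list. length xs = k}"
    using assms(2) card_lists_length_eq[of "UNIV :: bool set" k] by (simp add: card_UNIV_bool)
  then obtain f where "f ` A \<subseteq> {xs :: bool list. length xs = k}" "inj_on f A"
    using card_le_inj[OF assms(1) fin] by blast
  then show ?thesis by blast
qed

lemma ereal_le_enn2ereal_divide:
  assumes "ennreal (real n * a) \<le> E" "0 \<le> a" "0 < n"
  shows "ereal a \<le> enn2ereal E / ereal (real n)"
proof -
  have "ereal (real n * a) \<le> enn2ereal E"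
    using assms by (metis enn2ereal_ennreal less_eq_ennreal.rep_eq mult_nonneg_nonneg of_nat_0_le_iff)
  then have "ereal (real n * a) / ereal (real n) \<le> enn2ereal E / ereal (real n)"
    using assms(3) by (intro ereal_divide_right_mono) auto
  then show ?thesis using assms(3) by simp
qed

lemma enn2ereal_divide_le_ereal:
  assumes "E \<le> ennreal (real n * a)" "0 \<le> a" "0 < n"
  shows "enn2ereal E / ereal (real n) \<le> ereal a"
proof -
  have "enn2ereal E \<le> ereal (real n * a)"
    using assms by (metis enn2ereal_ennreal less_eq_ennreal.rep_eq mult_nonneg_nonneg of_nat_0_le_iff)
  then have "enn2ereal E / ereal (real n) \<le> ereal (real n * a) / ereal (real n)"
    using assms(3) by (intro ereal_divide_right_mono) auto
  then show ?thesis using assms(3) by simp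
qed

lemma limsup_le_limit:
  fixes f :: "nat \<Rightarrow> ereal"
  assumes "\<forall>\<^sub>F n in sequentially. f n \<le> ereal (g n)" and "g \<longlonglongrightarrow> l"
  shows "limsup f \<le> ereal l"
proof -
  have "limsup f \<le> limsup (\<lambda>n. ereal (g n))" using assms(1) by (rule Limsup_mono)
  also have "\<dots> = ereal l" using assms(2) by (intro lim_imp_Limsup) auto
  finally show ?thesis .
qed

lemma com_achievable_nonneg:
  assumes "com_achievable P \<epsilon> R"
  shows "0 \<le> R"
proof -
  obtain enc where "limsup (\<lambda>n. enn2ereal (exp_length (P n) (enc n)) / ereal (real n)) \<le> ereal R"
    using assms unfolding com_achievable_def by blast
  moreover have "0 \<le> limsup (\<lambda>n. enn2ereal (exp_length (P n) (enc n)) / ereal (real n))"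
    by (intro le_Limsup always_eventually allI)
       (simp_all add: enn2ereal_nonneg ereal_zero_le_0_iff)
  ultimately have "0 \<le> ereal R" by (metis order_trans)
  then show ?thesis by simp
qed

lemma measure_decodable_unlikely_short_le:
  fixes Q :: "('a list \<times> 'b list) pmf" and enc :: "'a list \<Rightarrow> 'b list \<Rightarrow> bool list"
  assumes "0 \<le> c"
  shows "measure Q {z. dec (enc (fst z) (snd z)) (snd z) = fst z \<and> cond_prob Q (fst z) (snd z) \<le> c
            \<and> length (enc (fst z) (snd z)) \<le> L} \<le> 2 ^ Suc L * c"
    (is "measure Q ?B \<le> _")
proof (rule measure_le_if_snd_fibres_le)
  fix y
  define X where "X = {x. (x, y) \<in> ?B}"
  let ?py = "pmf (map_pmf snd Q) y" and ?W = "{xs :: bool list. length xs \<le> L}"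
  have inj: "inj_on (\<lambda>x. enc x y) X" and img: "(\<lambda>x. enc x y) ` X \<subseteq> ?W"
    unfolding X_def inj_on_def by force+
  have fin: "finite X"
    using finite_imageD[OF finite_subset[OF img finite_bool_lists_length_le] inj] .
  have "card X \<le> card ?W"
    using card_image[OF inj] card_mono[OF finite_bool_lists_length_le img] by simp
  then have "real (card X) \<le> real (2 ^ Suc L)"
    using card_bool_lists_length_le[of L] by (intro of_nat_mono) simp
  then have card_X: "real (card X) \<le> 2 ^ Suc L" by simp
  have "?B \<inter> {z. snd z = y} = (\<lambda>x. (x, y)) ` X" unfolding X_def by auto
  then have "measure Q (?B \<inter> {z. snd z = y}) = (\<Sum>x\<in>X. pmf Q (x, y))"
    using fin by (simp add: measure_measure_pmf_finite sum.reindex inj_on_def)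
  also have "\<dots> \<le> (\<Sum>x\<in>X. c * ?py)"
    by (intro sum_mono) (auto simp: X_def pmf_eq_cond_prob_mult mult_right_mono)
  also have "\<dots> = real (card X) * c * ?py" by simp
  also have "\<dots> \<le> 2 ^ Suc L * c * ?py"
    using card_X assms by (intro mult_right_mono) auto
  also have "?py = measure Q {z. snd z = y}" by (simp add: pmf_map vimage_def)
  finally show "measure Q (?B \<inter> {z. snd z = y}) \<le> 2 ^ Suc L * c * measure Q {z. snd z = y}" .
qed

lemma exp_length_ge_measure_long:
  fixes Q :: "('a list \<times> 'b list) pmf"
  shows "ennreal (real (Suc L) * measure Q {z. L < length (enc (fst z) (snd z))}) \<le> exp_length Q enc"
proof -
  let ?G = "{z. L < length (enc (fst z) (snd z))}"
  have "ennreal (real (Suc L) * measure Q ?G) = (\<integral>\<^sup>+z. ennreal (real (Suc L)) * indicator ?G z \<partial>Q)"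
    by (simp add: nn_integral_cmult_indicator measure_pmf.emeasure_eq_measure ennreal_mult)
  also have "\<dots> \<le> exp_length Q enc"
    unfolding exp_length_def
  proof (intro nn_integral_mono)
    fix z
    have "ennreal (real (Suc L)) \<le> ennreal (real (length (enc (fst z) (snd z))))" if "z \<in> ?G"
      using that by (intro ennreal_leI) simp
    then show "ennreal (real (Suc L)) * indicator ?G z \<le> ennreal (real (length (enc (fst z) (snd z))))"
      by (cases "z \<in> ?G") simp_all
  qed
  finally show ?thesis .
qed

lemma exp_length_ge:
  fixes Q :: "('a list \<times> 'b list) pmf"
  assumes "0 \<le> c"
  shows "ennreal (real (Suc L) * (1 - err_prob Q enc dec - measure Q {z. c < cond_prob Q (fst z) (snd z)}
           - 2 ^ Suc L * c)) \<le> exp_length Q enc"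
proof -
  define W where "W = {z. dec (enc (fst z) (snd z)) (snd z) \<noteq> fst z}"
  define D where "D = {z. c < cond_prob Q (fst z) (snd z)}"
  define B where "B = {z. dec (enc (fst z) (snd z)) (snd z) = fst z \<and> cond_prob Q (fst z) (snd z) \<le> c
            \<and> length (enc (fst z) (snd z)) \<le> L}"
  define G where "G = {z. L < length (enc (fst z) (snd z))}"
  have "W \<union> D \<union> B \<union> G = UNIV" unfolding W_def D_def B_def G_def by (auto simp: not_less)
  then have "1 = measure Q (W \<union> D \<union> B \<union> G)" by (simp only: measure_pmf_UNIV)
  also have "\<dots> \<le> measure Q (W \<union> D \<union> B) + measure Q G"
    by (rule measure_Un_le) simp_all
  also have "\<dots> \<le> measure Q (W \<union> D) + measure Q B + measure Q G"
    by (intro add_right_mono measure_Un_le) simp_all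
  also have "\<dots> \<le> measure Q W + measure Q D + measure Q B + measure Q G"
    by (intro add_right_mono measure_Un_le) simp_all
  finally have "1 - measure Q W - measure Q D - 2 ^ Suc L * c \<le> measure Q G"
    using measure_decodable_unlikely_short_le[OF assms, of Q dec enc L] unfolding B_def by linarith
  then have "real (Suc L) * (1 - err_prob Q enc dec - measure Q D - 2 ^ Suc L * c)
               \<le> real (Suc L) * measure Q G"
    unfolding err_prob_def W_def by (rule mult_left_mono) simp
  then show ?thesis
    unfolding D_def G_def using order_trans[OF ennreal_leI exp_length_ge_measure_long] by blast
qed

lemma pow2_floor_mult_powr_le:
  assumes "\<eta> < b"
  shows "2 ^ Suc (nat \<lfloor>real n * (b - \<eta>)\<rfloor>) * 2 powr - (real n * b) \<le> 2 * 2 powr - (real n * \<eta>)"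
proof -
  let ?L = "nat \<lfloor>real n * (b - \<eta>)\<rfloor>"
  have "real ?L \<le> real n * (b - \<eta>)" using assms by simp
  then have "(2::real) ^ Suc ?L \<le> 2 * 2 powr (real n * (b - \<eta>))" by (simp add: powr_realpow[symmetric])
  then have "(2::real) ^ Suc ?L * 2 powr - (real n * b) \<le> 2 * 2 powr (real n * (b - \<eta>)) * 2 powr - (real n * b)"
    by (simp add: mult_right_mono)
  also have "\<dots> = 2 * 2 powr - (real n * \<eta>)" by (simp add: powr_add[symmetric] algebra_simps)
  finally show ?thesis .
qed

lemma exp_length_ge_at_blocklength:
  assumes "0 < n" "0 < \<eta>" "\<eta> < b" "0 \<le> 1 - \<epsilon> - 3 * \<eta>"
    and err: "err_prob (P n) enc dec < \<epsilon> + \<eta>"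
    and low_density: "measure (P n) {w. ent_density P n w < b} < \<eta>"
    and small: "2 * 2 powr - (real n * \<eta>) < \<eta>"
  shows "ennreal (real n * ((b - \<eta>) * (1 - \<epsilon> - 3 * \<eta>))) \<le> exp_length (P n) enc"
proof -
  define L where "L = nat \<lfloor>real n * (b - \<eta>)\<rfloor>"
  define c where "c = 2 powr - (real n * b)"
  have "measure (P n) {z. c < cond_prob (P n) (fst z) (snd z)} < \<eta>"
    using measure_cond_prob_gt_le_ent_density[OF \<open>0 < n\<close>, of P b] low_density unfolding c_def by linarith
  moreover have "2 ^ Suc L * c < \<eta>"
    using pow2_floor_mult_powr_le[OF \<open>\<eta> < b\<close>, of n] small unfolding L_def c_def by linarith
  ultimately have success: "1 - \<epsilon> - 3 * \<eta> \<le> 1 - err_prob (P n) enc dec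
      - measure (P n) {z. c < cond_prob (P n) (fst z) (snd z)} - 2 ^ Suc L * c"
    using err by linarith
  have length: "real n * (b - \<eta>) \<le> real (Suc L)" unfolding L_def by linarith
  have "ennreal (real n * ((b - \<eta>) * (1 - \<epsilon> - 3 * \<eta>))) \<le> ennreal (real (Suc L) *
      (1 - err_prob (P n) enc dec - measure (P n) {z. c < cond_prob (P n) (fst z) (snd z)} - 2 ^ Suc L * c))"
    using assms by (subst mult.assoc[symmetric], intro ennreal_leI mult_mono[OF length success]) auto
  also have "\<dots> \<le> exp_length (P n) enc"
    unfolding c_def by (rule exp_length_ge) simp
  finally show ?thesis .
qed

lemma converse_rate_margin:
  assumes err: "limsup (\<lambda>n. ereal (err_prob (P n) (enc n) (dec n))) \<le> ereal \<epsilon>"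
    and rate: "limsup (\<lambda>n. enn2ereal (exp_length (P n) (enc n)) / ereal (real n)) \<le> ereal R"
    and b: "((\<lambda>n. measure_pmf.prob (P n) {w. ent_density P n w < b}) \<longlongrightarrow> 0) sequentially"
    and \<eta>: "0 < \<eta>" "\<eta> < b" "0 \<le> 1 - \<epsilon> - 3 * \<eta>"
  shows "(b - \<eta>) * (1 - \<epsilon> - 3 * \<eta>) \<le> R + \<eta>"
proof -
  have "\<forall>\<^sub>F n in sequentially. 0 < n \<and> err_prob (P n) (enc n) (dec n) < \<epsilon> + \<eta>
      \<and> measure_pmf.prob (P n) {w. ent_density P n w < b} < \<eta> \<and> 2 * 2 powr - (real n * \<eta>) < \<eta>
      \<and> enn2ereal (exp_length (P n) (enc n)) / ereal (real n) < ereal (R + \<eta>)"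
  proof (intro eventually_conj)
    show "\<forall>\<^sub>F n in sequentially. err_prob (P n) (enc n) (dec n) < \<epsilon> + \<eta>"
      using Limsup_lessD[OF le_less_trans[OF err, of "ereal (\<epsilon> + \<eta>)"]] \<eta> by simp
    show "\<forall>\<^sub>F n in sequentially. measure_pmf.prob (P n) {w. ent_density P n w < b} < \<eta>"
      using order_tendstoD(2)[OF b] \<eta> by simp
    have "((\<lambda>n. 2 * 2 powr - (real n * \<eta>)) \<longlongrightarrow> 0) sequentially" using \<eta> by real_asymp
    then show "\<forall>\<^sub>F n in sequentially. 2 * 2 powr - (real n * \<eta>) < \<eta>"
      using order_tendstoD(2)[OF _ \<eta>(1)] by blast
    show "\<forall>\<^sub>F n in sequentially. enn2ereal (exp_length (P n) (enc n)) / ereal (real n) < ereal (R + \<eta>)"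
      using Limsup_lessD[OF le_less_trans[OF rate, of "ereal (R + \<eta>)"]] \<eta> by simp
  qed (rule eventually_gt_at_top)
  then obtain n where n: "0 < n" "err_prob (P n) (enc n) (dec n) < \<epsilon> + \<eta>"
    "measure_pmf.prob (P n) {w. ent_density P n w < b} < \<eta>" "2 * 2 powr - (real n * \<eta>) < \<eta>"
    and rate_n: "enn2ereal (exp_length (P n) (enc n)) / ereal (real n) < ereal (R + \<eta>)"
    using eventually_happens'[OF sequentially_bot] by blast
  have "ereal ((b - \<eta>) * (1 - \<epsilon> - 3 * \<eta>)) \<le> enn2ereal (exp_length (P n) (enc n)) / ereal (real n)"
    using \<eta> n(1) by (intro ereal_le_enn2ereal_divide exp_length_ge_at_blocklength[OF n(1) \<eta> n(2-4)]) auto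
  also note rate_n
  finally show ?thesis by simp
qed

lemma converse_rate_bound:
  assumes ach: "com_achievable P \<epsilon> R" and "\<epsilon> < 1"
    and b: "((\<lambda>n. measure_pmf.prob (P n) {w. ent_density P n w < b}) \<longlongrightarrow> 0) sequentially"
  shows "(1 - \<epsilon>) * b \<le> R"
proof (cases "0 < b")
  case False
  then have "(1 - \<epsilon>) * b \<le> 0" using \<open>\<epsilon> < 1\<close> by (simp add: mult_nonneg_nonpos)
  then show ?thesis using com_achievable_nonneg[OF ach] by linarith
next
  case True
  obtain enc dec where
    err: "limsup (\<lambda>n. ereal (err_prob (P n) (enc n) (dec n))) \<le> ereal \<epsilon>" and
    rate: "limsup (\<lambda>n. enn2ereal (exp_length (P n) (enc n)) / ereal (real n)) \<le> ereal R"
    using ach unfolding com_achievable_def by blast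
  have "((\<lambda>\<eta>. R + \<eta>) \<longlongrightarrow> R + 0) (at_right 0)"
    and "((\<lambda>\<eta>. (b - \<eta>) * (1 - \<epsilon> - 3 * \<eta>)) \<longlongrightarrow> (b - 0) * (1 - \<epsilon> - 3 * 0)) (at_right 0)"
    by (intro tendsto_intros)+
  moreover have "\<forall>\<^sub>F \<eta> in at_right 0. (b - \<eta>) * (1 - \<epsilon> - 3 * \<eta>) \<le> R + \<eta>"
    unfolding eventually_at_right_field using True \<open>\<epsilon> < 1\<close>
    by (intro exI[of _ "min b ((1 - \<epsilon>) / 3)"]) (auto intro: converse_rate_margin[OF err rate b])
  ultimately have "(b - 0) * (1 - \<epsilon> - 3 * 0) \<le> R + 0"
    by (rule tendsto_le[OF trivial_limit_at_right_real])
  then show ?thesis by (simp add: mult.commute)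
qed

lemma exists_subset_measure_between:
  fixes Q :: "'c::countable pmf"
  assumes atoms: "\<And>z. z \<in> A \<Longrightarrow> pmf Q z \<le> m" and "0 \<le> m"
  shows "\<exists>S\<subseteq>A. min (measure Q A) t \<le> measure Q S \<and> measure Q S \<le> max t 0 + m"
proof -
  \<comment> \<open>add the atoms of \<open>A\<close> one at a time; each step raises the measure by at most \<open>m\<close>\<close>
  define S where "S k = {z \<in> A. to_nat z < k}" for k
  have step: "measure Q (S (Suc k)) \<le> measure Q (S k) + m" for k
  proof -
    have "S (Suc k) \<subseteq> S k \<union> ({from_nat k} \<inter> A)"
      unfolding S_def by (auto simp: less_Suc_eq)
    then have "measure Q (S (Suc k)) \<le> measure Q (S k \<union> ({from_nat k} \<inter> A))"
      by (intro measure_pmf.finite_measure_mono) auto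
    also have "\<dots> \<le> measure Q (S k) + measure Q ({from_nat k} \<inter> A)"
      by (rule measure_Un_le) simp_all
    also have "measure Q ({from_nat k} \<inter> A) \<le> m"
      using atoms \<open>0 \<le> m\<close> by (cases "from_nat k \<in> A") (auto simp: measure_pmf_single)
    finally show ?thesis by simp
  qed
  show ?thesis
  proof (cases "\<exists>k. t \<le> measure Q (S k)")
    case True
    define k where "k = (LEAST k. t \<le> measure Q (S k))"
    have t_le: "t \<le> measure Q (S k)" unfolding k_def using True by (rule LeastI_ex)
    show ?thesis
    proof (cases k)
      case 0
      then have "t \<le> 0" using t_le by (simp add: S_def)
      then show ?thesis using \<open>0 \<le> m\<close> by (intro exI[of _ "{}"]) auto
    next
      case (Suc j)
      then have "j < k" by simp
      then have "\<not> t \<le> measure Q (S j)" unfolding k_def by (rule not_less_Least)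
      then have "measure Q (S k) < t + m" using step[of j] Suc by simp
      moreover have "S k \<subseteq> A" unfolding S_def by auto
      ultimately show ?thesis using t_le by (intro exI[of _ "S k"]) auto
    qed
  next
    case False
    have "(\<lambda>k. measure Q (S k)) \<longlonglongrightarrow> measure Q (\<Union>k. S k)"
      by (rule measure_pmf.finite_Lim_measure_incseq) (auto simp: incseq_def S_def)
    moreover have "(\<Union>k. S k) = A" unfolding S_def by auto
    ultimately have "measure Q A \<le> t"
      using False by (intro LIMSEQ_le_const2[of "\<lambda>k. measure Q (S k)"]) (auto simp: not_le less_imp_le)
    then show ?thesis using \<open>0 \<le> m\<close> by (intro exI[of _ A]) auto
  qed
qed

definition tagged_codewords :: "nat \<Rightarrow> nat \<Rightarrow> bool list set" where
  "tagged_codewords k1 k2 = {[False]} \<union> {True # False # w | w. length w = k1} \<union> {True # True # w | w. length w = k2}"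

lemma prefix_free_tagged_codewords: "prefix_free (tagged_codewords k1 k2)"
  unfolding prefix_free_def tagged_codewords_def
proof (intro ballI notI)
  fix u v assume "u \<in> {[False]} \<union> {True # False # w | w. length w = k1} \<union> {True # True # w | w. length w = k2}"
    and "v \<in> {[False]} \<union> {True # False # w | w. length w = k1} \<union> {True # True # w | w. length w = k2}"
    and "strict_prefix u v"
  moreover from \<open>strict_prefix u v\<close> have "prefix u v" "length u < length v"
    by (auto simp: strict_prefix_def prefix_length_less)
  ultimately show False by auto
qed

lemma com_code_if_tagged: "(\<And>x y. enc x y \<in> tagged_codewords k1 k2) \<Longrightarrow> com_code n enc"
  using prefix_free_tagged_codewords[of k1 k2] unfolding com_code_def prefix_free_def by blast

lemma two_class_code_exists:
  fixes E S :: "('a \<times> 'b) set"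
  assumes "\<And>y. finite {x. (x, y) \<in> E}" "\<And>y. card {x. (x, y) \<in> E} \<le> 2 ^ k1"
    and "\<And>y. finite {x. (x, y) \<in> S}" "\<And>y. card {x. (x, y) \<in> S} \<le> 2 ^ k2"
  shows "\<exists>(enc :: 'a \<Rightarrow> 'b \<Rightarrow> bool list) (dec :: bool list \<Rightarrow> 'b \<Rightarrow> 'a).
    (\<forall>x y. enc x y \<in> tagged_codewords k1 k2) \<and>
    (\<forall>x y. (x, y) \<in> E \<union> S \<longrightarrow> dec (enc x y) y = x) \<and>
    (\<forall>x y. length (enc x y) \<le> 2 + k1 + (if (x, y) \<in> S then 2 + k2 else 0))"
proof -
  obtain f1 :: "'b \<Rightarrow> 'a \<Rightarrow> bool list" where f1_inj: "\<And>y. inj_on (f1 y) {x. (x, y) \<in> E}"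
    and f1_len: "\<And>x y. (x, y) \<in> E \<Longrightarrow> length (f1 y x) = k1"
    using fixed_length_code_exists[OF assms(1,2)] by (metis mem_Collect_eq)
  obtain f2 :: "'b \<Rightarrow> 'a \<Rightarrow> bool list" where f2_inj: "\<And>y. inj_on (f2 y) {x. (x, y) \<in> S}"
    and f2_len: "\<And>x y. (x, y) \<in> S \<Longrightarrow> length (f2 y x) = k2"
    using fixed_length_code_exists[OF assms(3,4)] by (metis mem_Collect_eq)
  define enc where "enc x y = (if (x, y) \<in> E then True # False # f1 y x
      else if (x, y) \<in> S then True # True # f2 y x else [False])" for x y
  define dec where "dec w y = (SOME x. (x, y) \<in> E \<union> S \<and> enc x y = w)" for w y
  have inj: "x' = x" if xy: "(x, y) \<in> E \<union> S" "(x', y) \<in> E \<union> S" and eq: "enc x' y = enc x y" for x x' y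
  proof -
    consider "(x, y) \<in> E" "(x', y) \<in> E" | "(x, y) \<in> S - E" "(x', y) \<in> S - E"
      | "(x, y) \<in> E \<longleftrightarrow> (x', y) \<notin> E"
      using xy by blast
    then show ?thesis
    proof cases
      case 1
      then have "f1 y x' = f1 y x" using eq by (simp add: enc_def)
      with 1 show ?thesis using inj_onD[OF f1_inj[of y]] by simp
    next
      case 2
      then have "f2 y x' = f2 y x" using eq by (simp add: enc_def)
      with 2 show ?thesis using inj_onD[OF f2_inj[of y]] by simp
    next
      case 3
      then show ?thesis using eq xy by (auto simp: enc_def)
    qed
  qed
  have "dec (enc x y) y = x" if "(x, y) \<in> E \<union> S" for x y
    unfolding dec_def by (rule someI2[of _ x]) (use that inj in auto)
  moreover have "enc x y \<in> tagged_codewords k1 k2" for x y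
    using f1_len[of x y] f2_len[of x y] by (auto simp: enc_def tagged_codewords_def)
  moreover have "length (enc x y) \<le> 2 + k1 + (if (x, y) \<in> S then 2 + k2 else 0)" for x y
    using f1_len[of x y] f2_len[of x y] by (auto simp: enc_def)
  ultimately show ?thesis by blast
qed

lemma exp_length_le:
  fixes Q :: "('a list \<times> 'b list) pmf"
  assumes "\<And>x y. length (enc x y) \<le> a + (if (x, y) \<in> S then b else 0)"
  shows "exp_length Q enc \<le> ennreal (real a + real b * measure Q S)"
proof -
  have "exp_length Q enc \<le> (\<integral>\<^sup>+z. ennreal (real a) + ennreal (real b) * indicator S z \<partial>Q)"
    unfolding exp_length_def
  proof (intro nn_integral_mono)
    fix z :: "'a list \<times> 'b list"
    have len: "real (length (enc (fst z) (snd z))) \<le> real (a + (if z \<in> S then b else 0))"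
      using assms[of "fst z" "snd z"] by (intro of_nat_mono) simp
    show "ennreal (real (length (enc (fst z) (snd z)))) \<le> ennreal (real a) + ennreal (real b) * indicator S z"
    proof (cases "z \<in> S")
      case True
      with len have "ennreal (real (length (enc (fst z) (snd z)))) \<le> ennreal (real a + real b)"
        by (intro ennreal_leI) simp
      with True show ?thesis by (simp add: ennreal_plus)
    next
      case False
      with len show ?thesis by (simp add: ennreal_leI)
    qed
  qed
  also have "\<dots> = ennreal (real a) + ennreal (real b) * emeasure Q S"
    by (simp add: nn_integral_add nn_integral_cmult_indicator)
  also have "\<dots> = ennreal (real a + real b * measure Q S)"
    by (simp add: measure_pmf.emeasure_eq_measure ennreal_mult ennreal_plus)
  finally show ?thesis .
qed

text \<open>The words of conditional probability in \<open>[lo, hi)\<close> that are encoded: just enough of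
  them to raise the success probability to \<open>1 - \<epsilon>\<close>, but no more than \<open>hi\<close> beyond that.\<close>
lemma exists_middle_class:
  fixes Q :: "('a::countable list \<times> 'b::countable list) pmf"
  assumes "\<epsilon> \<le> 1" "0 \<le> hi"
  obtains S where "S \<subseteq> {z. lo \<le> cond_prob Q (fst z) (snd z) \<and> cond_prob Q (fst z) (snd z) < hi}"
    and "1 - measure Q {z. hi \<le> cond_prob Q (fst z) (snd z)} - measure Q S
           \<le> max \<epsilon> (measure Q {z. cond_prob Q (fst z) (snd z) < lo})"
    and "measure Q S \<le> 1 - \<epsilon> + hi"
proof -
  define E where "E = {z. hi \<le> cond_prob Q (fst z) (snd z)}"
  define A where "A = {z. lo \<le> cond_prob Q (fst z) (snd z) \<and> cond_prob Q (fst z) (snd z) < hi}"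
  have "pmf Q z \<le> hi" if "z \<in> A" for z
  proof -
    obtain x y where z: "z = (x, y)" by (cases z)
    have "pmf Q z = cond_prob Q x y * pmf (map_pmf snd Q) y" unfolding z by (rule pmf_eq_cond_prob_mult)
    also have "\<dots> \<le> cond_prob Q x y" by (intro mult_left_le pmf_le_1 cond_prob_nonneg)
    also have "\<dots> \<le> hi" using that z by (simp add: A_def)
    finally show ?thesis .
  qed
  then obtain S where "S \<subseteq> A" and S_ge: "min (measure Q A) (1 - \<epsilon> - measure Q E) \<le> measure Q S"
      and S_le: "measure Q S \<le> max (1 - \<epsilon> - measure Q E) 0 + hi"
    using exists_subset_measure_between[of A Q hi "1 - \<epsilon> - measure Q E"] \<open>0 \<le> hi\<close> by auto
  have "measure Q {z. lo \<le> cond_prob Q (fst z) (snd z)} \<le> measure Q (E \<union> A)"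
    by (intro measure_pmf.finite_measure_mono) (auto simp: E_def A_def)
  also have "\<dots> \<le> measure Q E + measure Q A" by (rule measure_Un_le) simp_all
  finally have "measure Q {z. lo \<le> cond_prob Q (fst z) (snd z)} \<le> measure Q E + measure Q A" .
  moreover have "{z. cond_prob Q (fst z) (snd z) < lo} = space Q - {z. lo \<le> cond_prob Q (fst z) (snd z)}"
    by auto
  then have "measure Q {z. cond_prob Q (fst z) (snd z) < lo} = 1 - measure Q {z. lo \<le> cond_prob Q (fst z) (snd z)}"
    by (simp only: measure_pmf.prob_compl sets_measure_pmf UNIV_I)
  ultimately have err: "1 - measure Q E - measure Q S \<le> max \<epsilon> (measure Q {z. cond_prob Q (fst z) (snd z) < lo})"
    using S_ge by (cases "measure Q A \<le> 1 - \<epsilon> - measure Q E") (simp_all add: le_max_iff_disj)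
  have "max (1 - \<epsilon> - measure Q E) 0 \<le> 1 - \<epsilon>" using \<open>\<epsilon> \<le> 1\<close> measure_nonneg[of Q E] by simp
  with S_le have "measure Q S \<le> 1 - \<epsilon> + hi" by linarith
  with \<open>S \<subseteq> A\<close> err show ?thesis unfolding A_def E_def by (rule that)
qed

lemma one_shot_achievability:
  fixes Q :: "('a::countable list \<times> 'b::countable list) pmf"
  assumes "\<epsilon> \<le> 1"
  shows "\<exists>(enc :: 'a list \<Rightarrow> 'b list \<Rightarrow> bool list) (dec :: bool list \<Rightarrow> 'b list \<Rightarrow> 'a list). com_code n enc
    \<and> err_prob Q enc dec \<le> max \<epsilon> (measure Q {z. cond_prob Q (fst z) (snd z) < 1 / 2 ^ k2})
    \<and> exp_length Q enc \<le> ennreal (real (2 + k1) + real (2 + k2) * (1 - \<epsilon> + 1 / 2 ^ k1))"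
proof -
  define E where "E = {z. 1 / 2 ^ k1 \<le> cond_prob Q (fst z) (snd z)}"
  obtain S where S_sub: "S \<subseteq> {z. 1 / 2 ^ k2 \<le> cond_prob Q (fst z) (snd z) \<and> cond_prob Q (fst z) (snd z) < 1 / 2 ^ k1}"
    and S_err: "1 - measure Q E - measure Q S \<le> max \<epsilon> (measure Q {z. cond_prob Q (fst z) (snd z) < 1 / 2 ^ k2})"
    and S_le: "measure Q S \<le> 1 - \<epsilon> + 1 / 2 ^ k1"
    using exists_middle_class[OF \<open>\<epsilon> \<le> 1\<close>, where hi = "1 / 2 ^ k1" and lo = "1 / 2 ^ k2" and Q = Q]
    unfolding E_def by auto
  have "finite {x. (x, y) \<in> E}" "card {x. (x, y) \<in> E} \<le> 2 ^ k1" for y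
    using card_cond_prob_ge_inverse_pow2[of k1 Q y] by (simp_all add: E_def)
  moreover have "finite {x. (x, y) \<in> S}" "card {x. (x, y) \<in> S} \<le> 2 ^ k2" for y
  proof -
    have "{x. (x, y) \<in> S} \<subseteq> {x. 1 / 2 ^ k2 \<le> cond_prob Q x y}" using S_sub by auto
    then show "finite {x. (x, y) \<in> S}" "card {x. (x, y) \<in> S} \<le> 2 ^ k2"
      using card_cond_prob_ge_inverse_pow2[of k2 Q y] by (auto intro: finite_subset card_mono order_trans)
  qed
  ultimately obtain enc :: "'a list \<Rightarrow> 'b list \<Rightarrow> bool list" and dec :: "bool list \<Rightarrow> 'b list \<Rightarrow> 'a list"
    where tagged: "\<And>x y. enc x y \<in> tagged_codewords k1 k2"
      and decodes: "\<And>x y. (x, y) \<in> E \<union> S \<Longrightarrow> dec (enc x y) y = x"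
      and length: "\<And>x y. length (enc x y) \<le> 2 + k1 + (if (x, y) \<in> S then 2 + k2 else 0)"
    using two_class_code_exists[of E k1 S k2] by blast
  have "err_prob Q enc dec \<le> measure Q (- (E \<union> S))"
    unfolding err_prob_def by (intro measure_pmf.finite_measure_mono) (auto simp: decodes)
  also have "\<dots> = 1 - measure Q (E \<union> S)"
    by (simp add: measure_pmf.prob_compl[symmetric] Compl_eq_Diff_UNIV)
  also have "measure Q (E \<union> S) = measure Q E + measure Q S"
    using S_sub by (intro measure_pmf.finite_measure_Union) (auto simp: E_def)
  finally have "err_prob Q enc dec \<le> max \<epsilon> (measure Q {z. cond_prob Q (fst z) (snd z) < 1 / 2 ^ k2})"
    using S_err by linarith
  moreover have "exp_length Q enc \<le> ennreal (real (2 + k1) + real (2 + k2) * (1 - \<epsilon> + 1 / 2 ^ k1))"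
  proof -
    have "exp_length Q enc \<le> ennreal (real (2 + k1) + real (2 + k2) * measure Q S)"
      by (rule exp_length_le) (use length in auto)
    also have "\<dots> \<le> ennreal (real (2 + k1) + real (2 + k2) * (1 - \<epsilon> + 1 / 2 ^ k1))"
      using S_le by (intro ennreal_leI add_left_mono mult_left_mono) simp_all
    finally show ?thesis .
  qed
  moreover have "com_code n enc" using tagged by (rule com_code_if_tagged)
  ultimately show ?thesis by blast
qed

lemma one_shot_achievability_powr:
  fixes Q :: "('a::countable list \<times> 'b::countable list) pmf"
  assumes "\<epsilon> \<le> 1" "0 \<le> a" "0 \<le> d"
  shows "\<exists>(enc :: 'a list \<Rightarrow> 'b list \<Rightarrow> bool list) (dec :: bool list \<Rightarrow> 'b list \<Rightarrow> 'a list). com_code n enc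
    \<and> err_prob Q enc dec \<le> max \<epsilon> (measure Q {z. cond_prob Q (fst z) (snd z) < 2 powr - a})
    \<and> exp_length Q enc \<le> ennreal (3 + d + (3 + a) * (1 - \<epsilon> + 2 powr - d))"
proof -
  define k1 where "k1 = nat \<lceil>d\<rceil>"
  define k2 where "k2 = nat \<lceil>a\<rceil>"
  obtain enc :: "'a list \<Rightarrow> 'b list \<Rightarrow> bool list" and dec :: "bool list \<Rightarrow> 'b list \<Rightarrow> 'a list"
    where "com_code n enc"
    and err: "err_prob Q enc dec \<le> max \<epsilon> (measure Q {z. cond_prob Q (fst z) (snd z) < 1 / 2 ^ k2})"
    and len: "exp_length Q enc \<le> ennreal (real (2 + k1) + real (2 + k2) * (1 - \<epsilon> + 1 / 2 ^ k1))"
    using one_shot_achievability[OF \<open>\<epsilon> \<le> 1\<close>] by blast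
  have thresholds: "1 / 2 ^ k2 \<le> (2::real) powr - a" "1 / 2 ^ k1 \<le> (2::real) powr - d"
    unfolding k1_def k2_def by (intro inverse_pow2_le_powr; linarith)+
  have lengths: "real (2 + k1) \<le> 3 + d" "real (2 + k2) \<le> 3 + a"
    unfolding k1_def k2_def using assms by linarith+
  have "real (2 + k1) + real (2 + k2) * (1 - \<epsilon> + 1 / 2 ^ k1) \<le> 3 + d + (3 + a) * (1 - \<epsilon> + 2 powr - d)"
    using thresholds lengths \<open>\<epsilon> \<le> 1\<close> by (intro add_mono mult_mono) auto
  then have "exp_length Q enc \<le> ennreal (3 + d + (3 + a) * (1 - \<epsilon> + 2 powr - d))"
    by (rule order_trans[OF len ennreal_leI])
  moreover have "measure Q {z. cond_prob Q (fst z) (snd z) < 1 / 2 ^ k2}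
      \<le> measure Q {z. cond_prob Q (fst z) (snd z) < 2 powr - a}"
    using thresholds by (intro measure_pmf.finite_measure_mono) auto
  then have "err_prob Q enc dec \<le> max \<epsilon> (measure Q {z. cond_prob Q (fst z) (snd z) < 2 powr - a})"
    by (rule order_trans[OF err max.mono[OF order_refl]])
  ultimately show ?thesis using \<open>com_code n enc\<close> by blast
qed

lemma achievable_rate:
  fixes P :: "nat \<Rightarrow> ('a::countable list \<times> 'b::countable list) pmf"
  assumes "0 \<le> \<epsilon>" "\<epsilon> \<le> 1" "0 < \<delta>" "0 \<le> \<alpha>"
    and \<alpha>: "((\<lambda>n. measure_pmf.prob (P n) {w. \<alpha> < ent_density P n w}) \<longlongrightarrow> 0) sequentially"
  shows "com_achievable P \<epsilon> ((1 - \<epsilon>) * \<alpha> + \<delta>)"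
proof -
  define f where "f n = 3 + real n * \<delta> + (3 + real n * \<alpha>) * (1 - \<epsilon> + 2 powr - (real n * \<delta>))" for n
  define good where "good n enc dec \<longleftrightarrow> com_code n enc
      \<and> err_prob (P n) enc dec \<le> max \<epsilon> (measure (P n) {z. cond_prob (P n) (fst z) (snd z) < 2 powr - (real n * \<alpha>)})
      \<and> exp_length (P n) enc \<le> ennreal (f n)"
    for n and enc :: "'a list \<Rightarrow> 'b list \<Rightarrow> bool list" and dec :: "bool list \<Rightarrow> 'b list \<Rightarrow> 'a list"
  have "\<forall>n. \<exists>enc dec. good n enc dec"
    unfolding good_def f_def using assms by (intro allI one_shot_achievability_powr) auto
  then obtain enc dec where "\<And>n. good n (enc n) (dec n)" by metis
  then have code: "\<And>n. com_code n (enc n)"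
    and err: "\<And>n. err_prob (P n) (enc n) (dec n)
                \<le> max \<epsilon> (measure (P n) {z. cond_prob (P n) (fst z) (snd z) < 2 powr - (real n * \<alpha>)})"
    and len: "\<And>n. exp_length (P n) (enc n) \<le> ennreal (f n)"
    unfolding good_def by blast+
  have "limsup (\<lambda>n. ereal (err_prob (P n) (enc n) (dec n))) \<le> ereal (max \<epsilon> 0)"
  proof (rule limsup_le_limit)
    show "\<forall>\<^sub>F n in sequentially. ereal (err_prob (P n) (enc n) (dec n))
        \<le> ereal (max \<epsilon> (measure_pmf.prob (P n) {w. \<alpha> < ent_density P n w}))"
      using eventually_gt_at_top[of 0]
    proof eventually_elim
      case (elim n)
      have "max \<epsilon> (measure (P n) {z. cond_prob (P n) (fst z) (snd z) < 2 powr - (real n * \<alpha>)})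
          \<le> max \<epsilon> (measure_pmf.prob (P n) {w. \<alpha> < ent_density P n w})"
        using measure_cond_prob_lt_le_ent_density[OF elim order_refl] by (rule max.mono[OF order_refl])
      then show ?case using order_trans[OF err[of n]] by (simp only: ereal_less_eq(3))
    qed
    show "(\<lambda>n. max \<epsilon> (measure_pmf.prob (P n) {w. \<alpha> < ent_density P n w})) \<longlonglongrightarrow> max \<epsilon> 0"
      by (intro tendsto_intros \<alpha>)
  qed
  moreover have "limsup (\<lambda>n. enn2ereal (exp_length (P n) (enc n)) / ereal (real n)) \<le> ereal (\<delta> + \<alpha> * (1 - \<epsilon>))"
  proof (rule limsup_le_limit)
    show "\<forall>\<^sub>F n in sequentially. enn2ereal (exp_length (P n) (enc n)) / ereal (real n) \<le> ereal (f n / real n)"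
      using eventually_gt_at_top[of 0]
    proof eventually_elim
      case (elim n)
      have "0 \<le> f n" using assms unfolding f_def by (intro add_nonneg_nonneg mult_nonneg_nonneg) auto
      with elim len[of n] show ?case by (intro enn2ereal_divide_le_ereal) auto
    qed
    show "(\<lambda>n. f n / real n) \<longlonglongrightarrow> \<delta> + \<alpha> * (1 - \<epsilon>)" unfolding f_def using \<open>0 < \<delta>\<close> by real_asymp
  qed
  ultimately show ?thesis
    unfolding com_achievable_def using code \<open>0 \<le> \<epsilon>\<close> by (auto simp: algebra_simps)
qed

lemma ereal_mult_Sup_le_Inf:
  assumes "0 < c" and "\<And>b r. b \<in> B \<Longrightarrow> r \<in> R \<Longrightarrow> c * b \<le> r"
  shows "ereal c * Sup (ereal ` B) \<le> Inf (ereal ` R)"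
proof (rule Inf_greatest)
  fix x assume "x \<in> ereal ` R"
  then obtain r where "x = ereal r" "r \<in> R" by blast
  have "Sup (ereal ` B) \<le> ereal (r / c)"
    using assms \<open>r \<in> R\<close> by (intro Sup_least) (auto simp: field_simps mult.commute)
  then have "ereal c * Sup (ereal ` B) \<le> ereal c * ereal (r / c)"
    by (rule ereal_mult_left_mono) (use assms in simp)
  then show "ereal c * Sup (ereal ` B) \<le> x" using assms \<open>x = ereal r\<close> by simp
qed

lemma Inf_le_ereal_mult_Inf:
  assumes "0 < c" and "\<And>a \<delta>. a \<in> A \<Longrightarrow> 0 < \<delta> \<Longrightarrow> c * a + \<delta> \<in> R"
  shows "Inf (ereal ` R) \<le> ereal c * Inf (ereal ` A)"
proof -
  have "Inf (ereal ` R) \<le> ereal c * ereal a" if "a \<in> A" for a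
  proof (rule ereal_le_epsilon2)
    fix \<delta> :: real assume "0 < \<delta>"
    then have "Inf (ereal ` R) \<le> ereal (c * a + \<delta>)" using assms(2)[OF that] by (intro Inf_lower) auto
    then show "Inf (ereal ` R) \<le> ereal c * ereal a + ereal \<delta>" by simp
  qed
  then have "Inf (ereal ` R) \<le> Inf {ereal c * x |x. x \<in> ereal ` A}" by (intro Inf_greatest) auto
  also have "\<dots> = ereal c * Inf (ereal ` A)" using ereal_Inf_cmult[OF assms(1)] by simp
  finally show ?thesis .
qed

theorem theorem6:
  fixes P :: "nat \<Rightarrow> ('a::countable list \<times> 'b::countable list) pmf"
    and \<epsilon> :: real
  assumes "general_source P"
    and "0 \<le> \<epsilon>" and "\<epsilon> < 1"
  shows "ereal (1 - \<epsilon>) * lower_cond_entropy P \<le> R_com P \<epsilon>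
         \<and> R_com P \<epsilon> \<le> ereal (1 - \<epsilon>) * upper_cond_entropy P"
proof
  show "ereal (1 - \<epsilon>) * lower_cond_entropy P \<le> R_com P \<epsilon>"
    unfolding lower_cond_entropy_def p_liminf_def R_com_def
    using \<open>\<epsilon> < 1\<close> by (intro ereal_mult_Sup_le_Inf) (auto intro: converse_rate_bound)
  show "R_com P \<epsilon> \<le> ereal (1 - \<epsilon>) * upper_cond_entropy P"
    unfolding upper_cond_entropy_def p_limsup_def R_com_def
    using assms(2,3) by (intro Inf_le_ereal_mult_Inf) (auto intro!: achievable_rate ent_density_threshold_nonneg)
qed

end
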